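(* Let $q$ be a prime power and $n,k,l$ positive integers. The extreme points of the $l$-chain profile polytope of $k$-Sperner families of subspaces of $\mathbb{F}_q^n$ are the $l$-chain profile vectors of the families that are unions of at most $k$ full levels.
   Context: Level $i$ is the set of all $i$-dimensional subspaces of $\mathbb{F}_q^n$, $0\le i\le n$. A family $\mathcal{F}$ of subspaces is $k$-Sperner if it contains no chain $F_1\subsetneq F_2\subsetneq\dots\subsetneq F_{k+1}$ of $k+1$ members. The $l$-chain profile vector of a family $\mathcal{F}$ of subspaces is the vector in $\mathbb{R}^{\binom{n+1}{l}}$ whose coordinates are indexed by sets $\{i_1<i_2<\dots<i_l\}\subseteq\{0,\dots,n\}$, the coordinate for $\{i_1,\dots,i_l\}$ being the number of chains $F_1\subsetneq\dots\subsetneq F_l$ with $F_j\in\mathcal{F}$ and $\dim F_j=i_j$ for all $j$. The $l$-chain profile polytope of $k$-Sperner families is the convex hull of the $l$-chain profile vectors of all $k$-Sperner families of subspaces of $\mathbb{F}_q^n$. *)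

theory Defs
  imports "HOL-Analysis.Analysis" "HOL-Library.Function_Algebras"
begin

text \<open>Real-valued functions on an index type form a real vector space (pointwise
operations); this lets us use the library's convex hull and extreme points for
profile vectors, which are indexed by sets of levels.\<close>

instantiation "fun" :: (type, real_vector) real_vector
begin
definition scaleR_fun :: "real \<Rightarrow> ('a \<Rightarrow> 'b) \<Rightarrow> 'a \<Rightarrow> 'b"
  where "scaleR_fun r f = (\<lambda>x. r *\<^sub>R f x)"
instance
  by standard (auto simp: scaleR_fun_def fun_eq_iff scaleR_add_right scaleR_add_left)
end

text \<open>The ambient space is \<open>'a ^ 'n\<close> with \<open>'a\<close> a finite field (so \<open>q = CARD('a)\<close> is a prime
power) and \<open>n = CARD('n)\<close>.\<close>

definition level :: "nat \<Rightarrow> ('a::{finite,field} ^ 'n) set set" where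
  "level i = {S. vec.subspace S \<and> vec.dim S = i}"

definition all_subspaces :: "('a::{finite,field} ^ 'n) set set" where
  "all_subspaces = {S. vec.subspace S}"

definition is_chain_in :: "'v set set \<Rightarrow> 'v set list \<Rightarrow> bool" where
  "is_chain_in \<F> cs \<longleftrightarrow> set cs \<subseteq> \<F> \<and> sorted_wrt (\<subset>) cs"

definition k_sperner :: "nat \<Rightarrow> ('a::{finite,field} ^ 'n) set set \<Rightarrow> bool" where
  "k_sperner k \<F> \<longleftrightarrow> \<F> \<subseteq> all_subspaces \<and>
     \<not> (\<exists>cs. length cs = k + 1 \<and> is_chain_in \<F> cs)"

definition chain_profile :: "nat \<Rightarrow> ('a::{finite,field} ^ 'n) set set \<Rightarrow> nat set \<Rightarrow> real" where
  "chain_profile l \<F> = (\<lambda>I.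
     if I \<subseteq> {0..CARD('n)} \<and> card I = l
     then real (card {cs. length cs = l \<and> is_chain_in \<F> cs \<and>
                          map vec.dim cs = sorted_list_of_set I})
     else 0)"

definition chain_profile_polytope :: "'a::{finite,field} itself \<Rightarrow> 'n::finite itself \<Rightarrow> nat \<Rightarrow> nat \<Rightarrow> (nat set \<Rightarrow> real) set" where
  "chain_profile_polytope TYPE_a TYPE_n l k =
     convex hull {chain_profile l (\<F> :: ('a ^ 'n) set set) | \<F>. k_sperner k \<F>}"

end

theory Submission
  imports Defs
begin

text \<open>A union of at most \<open>k\<close> levels is \<open>k\<close>-Sperner, and in every coordinate \<open>J\<close> its
profile takes either the value \<open>0\<close> or the value of the profile of all subspaces. All profiles
lie in the box between these two functions, so such a profile is a vertex of the box and
hence an extreme point of the polytope.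

Conversely, an ordered basis \<open>b\<^sub>1, \<dots>, b\<^sub>n\<close> determines the full flag
\<open>E\<^sub>j = span {b\<^sub>1, \<dots>, b\<^sub>j}\<close>, and at most \<open>k\<close> of the \<open>E\<^sub>j\<close> belong to a \<open>k\<close>-Sperner
family \<open>\<F>\<close>. Since \<open>GL\<^sub>n\<close> acts transitively on the chains of subspaces with a given
dimension set \<open>J\<close> and freely on ordered bases, every such chain is the \<open>J\<close>-part of the flag
of equally many ordered bases. Consequently the profile of \<open>\<F>\<close> is the average, over all
ordered bases, of the profiles of the unions of the levels \<open>j\<close> with \<open>E\<^sub>j \<in> \<F>\<close>; so the
polytope is the convex hull of the level-union profiles and has no other extreme points.\<close>

lemma sum_fun_apply: "(\<Sum>g\<in>A. f g) x = (\<Sum>g\<in>A. f g x)"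
  by (induction A rule: infinite_finite_induct) auto

lemma finite_lists_length_eq_Collect: "finite {xs :: 'a::finite list. length xs = n \<and> P xs}"
  by (rule finite_subset[OF _ finite_lists_length_eq[of UNIV n]]) auto

lemma convex_fun_box: "convex {y :: 'i \<Rightarrow> real. \<forall>J. 0 \<le> y J \<and> y J \<le> f J}"
proof (rule convexI, safe)
  fix x y :: "'i \<Rightarrow> real" and u v :: real and J
  assume box: "\<forall>J. 0 \<le> x J \<and> x J \<le> f J" "\<forall>J. 0 \<le> y J \<and> y J \<le> f J"
    and uv: "0 \<le> u" "0 \<le> v" "u + v = 1"
  have "u * x J \<le> u * f J" "v * y J \<le> v * f J"
    using box uv by (simp_all add: mult_left_mono)
  moreover have "u * f J + v * f J = f J"
    using uv by (metis distrib_right mult_1)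
  ultimately show "0 \<le> (u *\<^sub>R x + v *\<^sub>R y) J" "(u *\<^sub>R x + v *\<^sub>R y) J \<le> f J"
    using box uv by (simp_all add: scaleR_fun_def)
qed

lemma extreme_point_of_box_vertex:
  fixes S :: "('i \<Rightarrow> real) set"
  assumes box: "S \<subseteq> {y. \<forall>J. 0 \<le> y J \<and> y J \<le> f J}" and "x \<in> S"
    and vertex: "\<And>J. x J = 0 \<or> x J = f J"
  shows "x extreme_point_of S"
  unfolding extreme_point_of_def
proof (intro conjI ballI notI \<open>x \<in> S\<close>)
  fix a b assume ab: "a \<in> S" "b \<in> S" and "x \<in> open_segment a b"
  then obtain u where u: "a \<noteq> b" "0 < u" "u < 1" "x = (1 - u) *\<^sub>R a + u *\<^sub>R b"
    by (auto simp: in_segment)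
  have "a J = b J" for J
  proof -
    have x: "x J = (1 - u) * a J + u * b J"
      using u(4) by (simp add: scaleR_fun_def)
    have bounds: "0 \<le> a J" "a J \<le> f J" "0 \<le> b J" "b J \<le> f J"
      using ab box by auto
    have nonneg: "0 \<le> (1 - u) * a J" "0 \<le> u * b J"
        "0 \<le> (1 - u) * (f J - a J)" "0 \<le> u * (f J - b J)"
      using u bounds by simp_all
    consider "x J = 0" | "x J = f J"
      using vertex by blast
    then show ?thesis
    proof cases
      case 1
      then have "(1 - u) * a J = 0" "u * b J = 0"
        using nonneg x by linarith+
      then show ?thesis
        using u(2,3) by simp
    next
      case 2
      then have "(1 - u) * (f J - a J) + u * (f J - b J) = 0"
        using x by (simp add: algebra_simps)
      then have "(1 - u) * (f J - a J) = 0" "u * (f J - b J) = 0"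
        using nonneg by linarith+
      then show ?thesis
        using u(2,3) by simp
    qed
  qed
  then show False
    using u(1) by (simp add: fun_eq_iff)
qed

lemma card_preimage_mult_card_eq:
  assumes "finite G" "finite C" "\<phi> ` G \<subseteq> C" "A \<subseteq> C"
    and fibres_le: "\<And>c c'. c \<in> C \<Longrightarrow> c' \<in> C \<Longrightarrow> card {g\<in>G. \<phi> g = c} \<le> card {g\<in>G. \<phi> g = c'}"
  shows "card {g\<in>G. \<phi> g \<in> A} * card C = card G * card A"
proof -
  define s where "s = card {g\<in>G. \<phi> g = (SOME c. c \<in> C)}"
  have fibre: "card {g\<in>G. \<phi> g = c} = s" if "c \<in> C" for c
    using fibres_le[OF that, of "SOME c. c \<in> C"] fibres_le[OF _ that, of "SOME c. c \<in> C"]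
      someI[of "\<lambda>c. c \<in> C", OF that] by (simp add: s_def)
  have count: "card {g\<in>G. \<phi> g \<in> B} = card B * s" if "B \<subseteq> C" for B
  proof -
    have "{g\<in>G. \<phi> g \<in> B} = (\<Union>c\<in>B. {g\<in>G. \<phi> g = c})"
      by auto
    also have "card \<dots> = (\<Sum>c\<in>B. card {g\<in>G. \<phi> g = c})"
      using that assms(1,2) finite_subset by (intro card_UN_disjoint) auto
    also have "\<dots> = card B * s"
      using that fibre by (simp add: subset_iff)
    finally show ?thesis .
  qed
  have "G = {g\<in>G. \<phi> g \<in> C}"
    using assms(3) by auto
  then have "card G = card C * s"
    using count[of C] by simp
  then show ?thesis
    using count[OF assms(4)] by simp
qed

lemma vec_dim_psubset:
  fixes A B :: "('a::field^'n) set"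
  assumes "vec.subspace A" "vec.subspace B" "A \<subset> B"
  shows "vec.dim A < vec.dim B"
  using assms by (metis vec.dim_psubset vec.span_eq_iff)

lemma sorted_dims_of_chain:
  assumes "is_chain_in F cs" "F \<subseteq> (all_subspaces :: ('a::{finite,field}^'n) set set)"
  shows "sorted_wrt (<) (map vec.dim cs)"
proof -
  have "sorted_wrt (\<lambda>x y. vec.dim x < vec.dim y) cs"
  proof (rule sorted_wrt_mono_rel[of _ "(\<subset>)"])
    show "sorted_wrt (\<subset>) cs"
      using assms(1) by (simp add: is_chain_in_def)
    show "vec.dim x < vec.dim y" if "x \<in> set cs" "y \<in> set cs" "x \<subset> y" for x y
      using assms that vec_dim_psubset[of x y] by (auto simp: is_chain_in_def all_subspaces_def)
  qed
  then show ?thesis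
    by (simp add: sorted_wrt_map)
qed

lemma k_sperner_levels:
  assumes "I \<subseteq> {0..CARD('n)}" "card I \<le> k"
  shows "k_sperner k (\<Union>i\<in>I. level i :: ('a::{finite,field}^'n) set set)"
  unfolding k_sperner_def
proof (intro conjI notI)
  show levels_sub: "(\<Union>i\<in>I. level i :: ('a^'n) set set) \<subseteq> all_subspaces"
    by (auto simp: level_def all_subspaces_def)
  assume "\<exists>cs. length cs = k + 1 \<and> is_chain_in (\<Union>i\<in>I. level i :: ('a^'n) set set) cs"
  then obtain cs :: "('a^'n) set list"
    where cs: "length cs = k + 1" "is_chain_in (\<Union>i\<in>I. level i) cs"
    by blast
  have "distinct (map vec.dim cs)"
    using sorted_dims_of_chain[OF cs(2) levels_sub] by (simp add: strict_sorted_iff)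
  then have "card (vec.dim ` set cs) = k + 1"
    using cs(1) by (metis distinct_card length_map set_map)
  moreover have "card (vec.dim ` set cs) \<le> card I"
  proof (rule card_mono)
    show "finite I"
      using assms(1) by (rule finite_subset) simp
    show "vec.dim ` set cs \<subseteq> I"
      using cs(2) by (auto simp: is_chain_in_def level_def)
  qed
  ultimately show False
    using assms(2) by simp
qed

definition chains_of_type :: "('a::{finite,field}^'n) set set \<Rightarrow> nat set \<Rightarrow> ('a^'n) set list set"
  where "chains_of_type F J = {cs. is_chain_in F cs \<and> map vec.dim cs = sorted_list_of_set J}"

lemma finite_chains_of_type: "finite (chains_of_type F J)"
  unfolding chains_of_type_def
  by (rule finite_subset[OF _ finite_lists_length_eq_Collect[of "length (sorted_list_of_set J)"]])
    (auto dest: arg_cong[of _ _ length])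

lemma chains_of_type_mono: "F \<subseteq> H \<Longrightarrow> chains_of_type F J \<subseteq> chains_of_type H J"
  by (auto simp: chains_of_type_def is_chain_in_def)

lemma chain_profile_eq_card_chains_of_type:
  fixes F :: "('a::{finite,field}^'n) set set"
  shows "chain_profile l F J =
    (if J \<subseteq> {0..CARD('n)} \<and> card J = l then real (card (chains_of_type F J)) else 0)"
proof (cases "J \<subseteq> {0..CARD('n)} \<and> card J = l")
  case True
  then have "{cs. length cs = l \<and> is_chain_in F cs \<and> map vec.dim cs = sorted_list_of_set J}
      = chains_of_type F J"
    by (auto simp: chains_of_type_def dest: arg_cong[of _ _ length])
  then show ?thesis
    using True by (simp add: chain_profile_def)
qed (auto simp: chain_profile_def)

lemma chains_of_type_levels:
  assumes "finite J"
  shows "chains_of_type (\<Union>i\<in>I. level i) J =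
    {cs \<in> chains_of_type (all_subspaces :: ('a::{finite,field}^'n) set set) J. J \<subseteq> I}"
proof -
  have "set cs \<subseteq> (\<Union>i\<in>I. level i) \<longleftrightarrow> set cs \<subseteq> all_subspaces \<and> J \<subseteq> I"
    if "map vec.dim cs = sorted_list_of_set J" for cs :: "('a^'n) set list"
  proof -
    have "vec.dim ` set cs = J"
      using arg_cong[OF that, of set] assms by simp
    then show ?thesis
      by (auto simp: level_def all_subspaces_def)
  qed
  then show ?thesis
    unfolding chains_of_type_def is_chain_in_def by blast
qed

lemma chain_profile_levels:
  "chain_profile l (\<Union>i\<in>I. level i :: ('a::{finite,field}^'n) set set) J
     = (if J \<subseteq> I then chain_profile l (all_subspaces :: ('a^'n) set set) J else 0)"
proof (cases "J \<subseteq> {0..CARD('n)}")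
  case True
  then have "finite J"
    by (rule finite_subset) simp
  then show ?thesis
    by (simp add: chain_profile_eq_card_chains_of_type chains_of_type_levels)
qed (simp add: chain_profile_eq_card_chains_of_type)

lemma chain_profile_bounds:
  assumes "F \<subseteq> (all_subspaces :: ('a::{finite,field}^'n) set set)"
  shows "0 \<le> chain_profile l F J \<and>
    chain_profile l F J \<le> chain_profile l (all_subspaces :: ('a^'n) set set) J"
  using card_mono[OF finite_chains_of_type chains_of_type_mono[OF assms]]
  by (simp add: chain_profile_eq_card_chains_of_type)

definition ordered_basis :: "('a::field^'n) list \<Rightarrow> bool" where
  "ordered_basis bs \<longleftrightarrow> distinct bs \<and> vec.independent (set bs) \<and> vec.span (set bs) = UNIV"

definition basis_flag :: "('a::field^'n) list \<Rightarrow> nat \<Rightarrow> ('a^'n) set" where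
  "basis_flag bs j = vec.span (set (take j bs))"

lemma length_ordered_basis:
  assumes "ordered_basis (bs :: ('a::field^'n) list)"
  shows "length bs = CARD('n)"
proof -
  have "length bs = card (set bs)"
    using assms by (simp add: ordered_basis_def distinct_card)
  also have "\<dots> = vec.dim (vec.span (set bs))"
    using assms unfolding ordered_basis_def by (metis vec.dim_span_eq_card_independent)
  also have "\<dots> = CARD('n)"
    using assms by (simp add: ordered_basis_def card_cart_basis)
  finally show ?thesis .
qed

lemma finite_ordered_bases: "finite {bs :: ('a::{finite,field}^'n) list. ordered_basis bs}"
  by (rule finite_subset[OF _ finite_lists_length_eq_Collect[of "CARD('n)" ordered_basis]])
    (auto simp: length_ordered_basis)

lemma subspace_basis_flag: "vec.subspace (basis_flag bs j)"
  by (simp add: basis_flag_def vec.subspace_span)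

lemma dim_basis_flag:
  assumes "ordered_basis (bs :: ('a::field^'n) list)" "j \<le> CARD('n)"
  shows "vec.dim (basis_flag bs j) = j"
proof -
  have "vec.independent (set (take j bs))"
    using assms(1) unfolding ordered_basis_def by (meson set_take_subset vec.independent_mono)
  then have "vec.dim (basis_flag bs j) = card (set (take j bs))"
    unfolding basis_flag_def by (rule vec.dim_span_eq_card_independent)
  also have "\<dots> = j"
    using assms by (simp add: ordered_basis_def distinct_card length_ordered_basis)
  finally show ?thesis .
qed

lemma basis_flag_psubset:
  assumes "ordered_basis (bs :: ('a::field^'n) list)" "i < j" "j \<le> CARD('n)"
  shows "basis_flag bs i \<subset> basis_flag bs j"
proof
  show "basis_flag bs i \<subseteq> basis_flag bs j"
    unfolding basis_flag_def using assms(2)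
    by (intro vec.span_mono) (simp add: set_take_subset_set_take)
  have "vec.dim (basis_flag bs i) \<noteq> vec.dim (basis_flag bs j)"
    using assms by (simp add: dim_basis_flag)
  then show "basis_flag bs i \<noteq> basis_flag bs j"
    by auto
qed

lemma basis_flag_map:
  "Vector_Spaces.linear (*s) (*s) h \<Longrightarrow> h ` basis_flag bs j = basis_flag (map h bs) j"
  by (simp add: basis_flag_def vec.linear_span_image take_map)

lemma ordered_basis_map:
  fixes h :: "'a::field^'n \<Rightarrow> 'a^'n"
  assumes lin: "Vector_Spaces.linear (*s) (*s) h" and "inj h" "ordered_basis bs"
  shows "ordered_basis (map h bs)"
proof -
  have "vec.span (h ` set bs) = range h"
    using assms(3) by (simp add: vec.linear_span_image[OF lin] ordered_basis_def)
  also have "\<dots> = UNIV"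
    using vec.linear_injective_imp_surjective[OF lin \<open>inj h\<close>] by simp
  finally have "vec.span (h ` set bs) = UNIV" .
  moreover have "inj_on h A" for A
    using \<open>inj h\<close> by (rule inj_on_subset) simp
  ultimately show ?thesis
    using assms vec.linear_independent_injective_image[OF lin, of "set bs"]
    by (simp add: ordered_basis_def distinct_map)
qed

lemma linear_map_between_ordered_bases:
  fixes bs bs' :: "('a::field^'n) list"
  assumes "ordered_basis bs" "ordered_basis bs'"
  obtains h where "Vector_Spaces.linear (*s) (*s) h" "inj h" "map h bs = bs'"
proof -
  have len: "length bs = length bs'"
    using assms by (simp add: length_ordered_basis)
  define f where "f x = the (map_of (zip bs bs') x)" for x
  obtain h where h: "Vector_Spaces.linear (*s) (*s) h" "\<forall>x\<in>set bs. h x = f x"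
    "range h = vec.span (f ` set bs)"
    using vec.linear_independent_extend_subspace[of "set bs" f] assms(1)
    by (auto simp: ordered_basis_def)
  have "map h bs = bs'"
  proof (rule nth_equalityI)
    fix i assume "i < length (map h bs)"
    then show "map h bs ! i = bs' ! i"
      using h(2) len assms(1) map_of_zip_nth[of bs bs' i] by (simp add: f_def ordered_basis_def)
  qed (simp add: len)
  moreover have "surj h"
  proof -
    have "f ` set bs = set bs'"
      using h(2) \<open>map h bs = bs'\<close> by force
    then show ?thesis
      using h(3) assms(2) by (simp add: ordered_basis_def)
  qed
  then have "inj h"
    using vec.linear_surjective_imp_injective[OF h(1)] by simp
  ultimately show ?thesis
    using that h(1) by blast
qed

lemma adapted_basis_extending:
  fixes cs :: "('a::{finite,field}^'n) set list"
  assumes "sorted_wrt (\<subset>) cs" "\<forall>c\<in>set cs. vec.subspace c" "distinct ps"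
    "vec.independent (set ps)" "\<forall>c\<in>set cs. set ps \<subseteq> c"
  shows "\<exists>bs. take (length ps) bs = ps \<and> ordered_basis bs \<and>
    (\<forall>c\<in>set cs. basis_flag bs (vec.dim c) = c)"
  using assms
proof (induction cs arbitrary: ps)
  case Nil
  obtain B where B: "set ps \<subseteq> B" "vec.independent B" "UNIV \<subseteq> vec.span B"
    using vec.maximal_independent_subset_extend[of "set ps" UNIV] Nil.prems by auto
  obtain xs where xs: "set xs = B - set ps" "distinct xs"
    using finite_distinct_list[of "B - set ps"] by auto
  have "set (ps @ xs) = B" "distinct (ps @ xs)"
    using xs B Nil.prems by auto
  then show ?case
    using B by (intro exI[of _ "ps @ xs"]) (auto simp: ordered_basis_def)
next
  case (Cons c cs)
  obtain B where B: "set ps \<subseteq> B" "B \<subseteq> c" "vec.independent B" "c \<subseteq> vec.span B"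
    using vec.maximal_independent_subset_extend[of "set ps" c] Cons.prems by auto
  have span_B: "vec.span B = c"
    using Cons.prems(2) B by (simp add: vec.span_subspace)
  obtain xs where xs: "set xs = B - set ps" "distinct xs"
    using finite_distinct_list[of "B - set ps"] by auto
  define ps' where "ps' = ps @ xs"
  have ps': "set ps' = B" "distinct ps'"
    using xs B Cons.prems by (auto simp: ps'_def)
  have "\<forall>c'\<in>set cs. set ps' \<subseteq> c'"
    using Cons.prems(1) B(2) ps'(1) by auto
  then obtain bs where bs: "take (length ps') bs = ps'" "ordered_basis bs"
    "\<forall>c\<in>set cs. basis_flag bs (vec.dim c) = c"
    using Cons.IH[of ps'] Cons.prems ps' B(3) by auto
  have "vec.dim c = card B"
    using vec.dim_span_eq_card_independent[OF B(3)] span_B by simp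
  also have "\<dots> = length ps'"
    using ps' distinct_card by metis
  finally have "basis_flag bs (vec.dim c) = c"
    using bs(1) ps'(1) span_B by (simp add: basis_flag_def)
  moreover have "take (length ps) bs = ps"
    using arg_cong[OF bs(1), of "take (length ps)"] by (simp add: ps'_def)
  ultimately show ?case
    using bs by auto
qed

lemma obtain_adapted_basis:
  fixes cs :: "('a::{finite,field}^'n) set list"
  assumes "sorted_wrt (\<subset>) cs" "\<forall>c\<in>set cs. vec.subspace c"
  obtains bs where "ordered_basis bs" "\<forall>c\<in>set cs. basis_flag bs (vec.dim c) = c"
  using adapted_basis_extending[OF assms, of "[]"] vec.independent_empty by auto

lemma card_ordered_bases_pos: "card {bs :: ('a::{finite,field}^'n) list. ordered_basis bs} > 0"
  using obtain_adapted_basis[of "[]"] finite_ordered_bases by (auto simp: card_gt_0_iff)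

lemma chains_of_type_transitive:
  fixes cs cs' :: "('a::{finite,field}^'n) set list"
  assumes "cs \<in> chains_of_type all_subspaces J" "cs' \<in> chains_of_type all_subspaces J"
  obtains h where "Vector_Spaces.linear (*s) (*s) h" "inj h" "map ((`) h) cs = cs'"
proof -
  have dims: "map vec.dim cs = map vec.dim cs'"
    using assms by (simp add: chains_of_type_def)
  obtain bs where bs: "ordered_basis bs" "\<forall>c\<in>set cs. basis_flag bs (vec.dim c) = c"
    using assms(1) obtain_adapted_basis[of cs]
    by (auto simp: chains_of_type_def is_chain_in_def all_subspaces_def)
  obtain bs' where bs': "ordered_basis bs'" "\<forall>c\<in>set cs'. basis_flag bs' (vec.dim c) = c"
    using assms(2) obtain_adapted_basis[of cs']
    by (auto simp: chains_of_type_def is_chain_in_def all_subspaces_def)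
  obtain h where h: "Vector_Spaces.linear (*s) (*s) h" "inj h" "map h bs = bs'"
    using linear_map_between_ordered_bases[OF bs(1) bs'(1)] .
  have "map ((`) h) cs = cs'"
  proof (rule nth_equalityI)
    show len: "length (map ((`) h) cs) = length cs'"
      using arg_cong[OF dims, of length] by simp
    fix t assume "t < length (map ((`) h) cs)"
    then have t: "t < length cs" "t < length cs'"
      using len by auto
    have "h ` (cs ! t) = h ` basis_flag bs (vec.dim (cs ! t))"
      using bs(2) t by simp
    also have "\<dots> = basis_flag bs' (vec.dim (cs' ! t))"
      using basis_flag_map[OF h(1)] h(3) dims t by (metis nth_map)
    also have "\<dots> = cs' ! t"
      using bs'(2) t by simp
    finally show "map ((`) h) cs ! t = cs' ! t"
      using t by simp
  qed
  then show ?thesis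
    using that h by blast
qed

definition flag_chain :: "('a::field^'n) list \<Rightarrow> nat set \<Rightarrow> ('a^'n) set list" where
  "flag_chain bs J = map (basis_flag bs) (sorted_list_of_set J)"

definition flag_levels :: "('a::{finite,field}^'n) set set \<Rightarrow> ('a^'n) list \<Rightarrow> nat set" where
  "flag_levels F bs = {j \<in> {0..CARD('n)}. basis_flag bs j \<in> F}"

lemma flag_chain_map:
  "Vector_Spaces.linear (*s) (*s) h \<Longrightarrow> flag_chain (map h bs) J = map ((`) h) (flag_chain bs J)"
  by (simp add: flag_chain_def basis_flag_map)

lemma flag_chain_of_type:
  fixes bs :: "('a::{finite,field}^'n) list"
  assumes bs: "ordered_basis bs" and J: "J \<subseteq> {0..CARD('n)}"
  shows "flag_chain bs J \<in> chains_of_type all_subspaces J"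
proof -
  have "finite J"
    using J by (rule finite_subset) simp
  then have set_J: "set (sorted_list_of_set J) = J"
    by simp
  have "sorted_wrt (\<lambda>i j. basis_flag bs i \<subset> basis_flag bs j) (sorted_list_of_set J)"
  proof (rule sorted_wrt_mono_rel[OF _ strict_sorted_list_of_set])
    fix i j assume "i \<in> set (sorted_list_of_set J)" "j \<in> set (sorted_list_of_set J)" "i < j"
    then show "basis_flag bs i \<subset> basis_flag bs j"
      using J set_J by (intro basis_flag_psubset[OF bs \<open>i < j\<close>]) auto
  qed
  moreover have "map vec.dim (flag_chain bs J) = sorted_list_of_set J"
    using J set_J by (auto simp: flag_chain_def dim_basis_flag[OF bs] intro!: map_idI)
  ultimately show ?thesis
    by (auto simp: chains_of_type_def is_chain_in_def flag_chain_def sorted_wrt_map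
        all_subspaces_def subspace_basis_flag)
qed

lemma flag_chain_in_chains_of_type_iff:
  fixes bs :: "('a::{finite,field}^'n) list"
  assumes "ordered_basis bs" "J \<subseteq> {0..CARD('n)}"
  shows "flag_chain bs J \<in> chains_of_type F J \<longleftrightarrow> J \<subseteq> flag_levels F bs"
proof -
  have "set (flag_chain bs J) = basis_flag bs ` J"
    using assms(2) finite_subset by (fastforce simp: flag_chain_def)
  then show ?thesis
    using flag_chain_of_type[OF assms] assms(2)
    by (auto simp: chains_of_type_def is_chain_in_def flag_levels_def)
qed

lemma card_flag_levels_le:
  fixes bs :: "('a::{finite,field}^'n) list"
  assumes "k_sperner k F" "ordered_basis bs"
  shows "card (flag_levels F bs) \<le> k"
proof (rule ccontr)
  assume "\<not> card (flag_levels F bs) \<le> k"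
  then have "k + 1 \<le> card (flag_levels F bs)"
    by simp
  then obtain J where J: "J \<subseteq> flag_levels F bs" "card J = k + 1"
    by (metis obtain_subset_with_card_n)
  then have "J \<subseteq> {0..CARD('n)}"
    by (auto simp: flag_levels_def)
  then have "flag_chain bs J \<in> chains_of_type F J"
    using flag_chain_in_chains_of_type_iff[OF assms(2)] J(1) by blast
  moreover have "length (flag_chain bs J) = k + 1"
    using J(2) by (simp add: flag_chain_def)
  ultimately show False
    using assms(1) by (auto simp: k_sperner_def chains_of_type_def)
qed

lemma card_flag_chain_fibre_le:
  fixes c c' :: "('a::{finite,field}^'n) set list"
  assumes "c \<in> chains_of_type all_subspaces J" "c' \<in> chains_of_type all_subspaces J"
  shows "card {bs. ordered_basis bs \<and> flag_chain bs J = c}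
    \<le> card {bs. ordered_basis bs \<and> flag_chain bs J = c'}"
proof -
  obtain h where h: "Vector_Spaces.linear (*s) (*s) h" "inj h" "map ((`) h) c = c'"
    using chains_of_type_transitive[OF assms] .
  show ?thesis
  proof (rule card_inj_on_le[of "map h"])
    show "inj_on (map h) {bs. ordered_basis bs \<and> flag_chain bs J = c}"
      by (rule inj_on_subset[OF inj_mapI[OF h(2)]]) simp
    show "map h ` {bs. ordered_basis bs \<and> flag_chain bs J = c}
        \<subseteq> {bs. ordered_basis bs \<and> flag_chain bs J = c'}"
      using h by (auto simp: ordered_basis_map flag_chain_map)
    show "finite {bs. ordered_basis bs \<and> flag_chain bs J = c'}"
      using finite_ordered_bases by (rule finite_subset[rotated]) auto
  qed
qed

lemma card_ordered_bases_flag_levels: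
  fixes F :: "('a::{finite,field}^'n) set set"
  assumes "F \<subseteq> all_subspaces" "J \<subseteq> {0..CARD('n)}"
  shows "card {bs. ordered_basis bs \<and> J \<subseteq> flag_levels F bs}
      * card (chains_of_type (all_subspaces :: ('a^'n) set set) J)
    = card {bs :: ('a^'n) list. ordered_basis bs} * card (chains_of_type F J)"
proof -
  let ?B = "{bs :: ('a^'n) list. ordered_basis bs}"
  let ?C = "chains_of_type (all_subspaces :: ('a^'n) set set) J"
  have "card {bs \<in> ?B. flag_chain bs J \<in> chains_of_type F J} * card ?C
      = card ?B * card (chains_of_type F J)"
  proof (rule card_preimage_mult_card_eq[where \<phi> = "\<lambda>bs. flag_chain bs J"])
    show "(\<lambda>bs. flag_chain bs J) ` ?B \<subseteq> ?C"
      using flag_chain_of_type[OF _ assms(2)] by auto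
  qed (use finite_ordered_bases finite_chains_of_type chains_of_type_mono[OF assms(1)]
      card_flag_chain_fibre_le in auto)
  moreover have "{bs \<in> ?B. flag_chain bs J \<in> chains_of_type F J}
      = {bs. ordered_basis bs \<and> J \<subseteq> flag_levels F bs}"
    using flag_chain_in_chains_of_type_iff[OF _ assms(2)] by auto
  ultimately show ?thesis
    by simp
qed

definition flag_level_union :: "('a::{finite,field}^'n) set set \<Rightarrow> ('a^'n) list \<Rightarrow> ('a^'n) set set"
  where "flag_level_union F bs = (\<Union>j\<in>flag_levels F bs. level j)"

lemma chain_profile_eq_average:
  fixes F :: "('a::{finite,field}^'n) set set"
  assumes "F \<subseteq> all_subspaces"
  shows "chain_profile l F = (\<Sum>bs | ordered_basis bs.
    (1 / card {bs :: ('a^'n) list. ordered_basis bs}) *\<^sub>R chain_profile l (flag_level_union F bs))"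
proof
  fix J
  let ?B = "{bs :: ('a^'n) list. ordered_basis bs}"
  let ?C = "chains_of_type (all_subspaces :: ('a^'n) set set) J"
  show "chain_profile l F J = (\<Sum>bs\<in>?B.
    (1 / card ?B) *\<^sub>R chain_profile l (flag_level_union F bs)) J"
  proof (cases "J \<subseteq> {0..CARD('n)} \<and> card J = l")
    case True
    have "((1 / card ?B) *\<^sub>R chain_profile l (flag_level_union F bs)) J
        = (if J \<subseteq> flag_levels F bs then card ?C / card ?B else 0)" for bs
      unfolding scaleR_fun_def flag_level_union_def chain_profile_levels
      using True by (simp add: chain_profile_eq_card_chains_of_type)
    then have "(\<Sum>bs\<in>?B. (1 / card ?B) *\<^sub>R chain_profile l (flag_level_union F bs)) J
        = (\<Sum>bs\<in>?B. if J \<subseteq> flag_levels F bs then card ?C / card ?B else 0)"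
      by (simp add: sum_fun_apply)
    also have "\<dots> = card {bs. ordered_basis bs \<and> J \<subseteq> flag_levels F bs} * card ?C / card ?B"
      by (simp add: sum.inter_filter[OF finite_ordered_bases, symmetric])
    also have "\<dots> = card (chains_of_type F J)"
      using card_ordered_bases_flag_levels[OF assms, of J] True
        card_ordered_bases_pos[where 'a='a and 'n='n]
      by (simp add: field_simps flip: of_nat_mult)
    finally show ?thesis
      using True by (simp add: chain_profile_eq_card_chains_of_type)
  next
    case False
    then have "chain_profile l H J = 0" for H :: "('a^'n) set set"
      by (simp only: chain_profile_eq_card_chains_of_type if_False)
    then show ?thesis
      by (simp add: sum_fun_apply scaleR_fun_def)
  qed
qed

lemma chain_profile_in_convex_hull_levels:
  fixes F :: "('a::{finite,field}^'n) set set"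
  assumes "k_sperner k F"
  shows "chain_profile l F \<in> convex hull {chain_profile l \<F> | \<F> :: ('a ^ 'n) set set.
    \<exists>I. I \<subseteq> {0..CARD('n)} \<and> card I \<le> k \<and> \<F> = (\<Union>i\<in>I. level i)}" (is "_ \<in> ?R")
proof -
  let ?B = "{bs :: ('a^'n) list. ordered_basis bs}"
  have "(\<Sum>bs\<in>?B. 1 / real (card ?B)) = 1"
    using card_ordered_bases_pos[where 'a='a and 'n='n] by simp
  moreover have "chain_profile l (flag_level_union F bs) \<in> ?R" if "bs \<in> ?B" for bs
  proof -
    have "flag_levels F bs \<subseteq> {0..CARD('n)}" "card (flag_levels F bs) \<le> k"
      using card_flag_levels_le[OF assms] that by (auto simp: flag_levels_def)
    then show ?thesis
      unfolding flag_level_union_def by (intro hull_inc) blast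
  qed
  ultimately have "(\<Sum>bs\<in>?B. (1 / card ?B) *\<^sub>R chain_profile l (flag_level_union F bs)) \<in> ?R"
    by (intro convex_sum[OF finite_ordered_bases convex_convex_hull]) auto
  then show ?thesis
    using assms chain_profile_eq_average[of F l] by (simp add: k_sperner_def)
qed

lemma chain_profile_polytope_eq_hull_levels:
  "chain_profile_polytope TYPE('a::{finite,field}) TYPE('n) l k
     = convex hull {chain_profile l \<F> | \<F> :: ('a ^ 'n) set set.
          \<exists>I. I \<subseteq> {0..CARD('n)} \<and> card I \<le> k \<and> \<F> = (\<Union>i\<in>I. level i)}"
  (is "_ = convex hull ?R")
  unfolding chain_profile_polytope_def
proof (rule antisym)
  show "convex hull {chain_profile l \<F> | \<F> :: ('a ^ 'n) set set. k_sperner k \<F>} \<subseteq> convex hull ?R"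
    by (intro hull_minimal convex_convex_hull) (auto intro: chain_profile_in_convex_hull_levels)
  show "convex hull ?R \<subseteq> convex hull {chain_profile l \<F> | \<F> :: ('a ^ 'n) set set. k_sperner k \<F>}"
    by (intro hull_mono) (auto intro: k_sperner_levels)
qed

lemma chain_profile_polytope_subset_box:
  "chain_profile_polytope TYPE('a::{finite,field}) TYPE('n) l k
     \<subseteq> {y. \<forall>J. 0 \<le> y J \<and> y J \<le> chain_profile l (all_subspaces :: ('a^'n) set set) J}"
  unfolding chain_profile_polytope_def
proof (intro hull_minimal convex_fun_box subsetI)
  fix y assume "y \<in> {chain_profile l \<F> | \<F> :: ('a ^ 'n) set set. k_sperner k \<F>}"
  then show "y \<in> {y. \<forall>J. 0 \<le> y J \<and> y J \<le> chain_profile l (all_subspaces :: ('a^'n) set set) J}"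
    using chain_profile_bounds by (auto simp: k_sperner_def)
qed

theorem corollary4p2:
  fixes k l :: nat
  assumes "k \<ge> 1" and "l \<ge> 1"
  shows "{x. x extreme_point_of chain_profile_polytope TYPE('a::{finite,field}) TYPE('n) l k}
       = {chain_profile l \<F> | \<F> :: ('a ^ 'n) set set.
            \<exists>I. I \<subseteq> {0..CARD('n)} \<and> card I \<le> k \<and> \<F> = (\<Union>i\<in>I. level i)}"
    (is "?L = ?R")
proof
  show "?L \<subseteq> ?R"
    using extreme_point_of_convex_hull by (auto simp: chain_profile_polytope_eq_hull_levels)
  show "?R \<subseteq> ?L"
  proof
    fix x assume "x \<in> ?R"
    then obtain I where x: "x = chain_profile l (\<Union>i\<in>I. level i :: ('a^'n) set set)"
      by blast
    have "x \<in> chain_profile_polytope TYPE('a) TYPE('n) l k"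
      using \<open>x \<in> ?R\<close> by (simp add: chain_profile_polytope_eq_hull_levels hull_inc)
    moreover have "x J = 0 \<or> x J = chain_profile l (all_subspaces :: ('a^'n) set set) J" for J
      by (simp add: x chain_profile_levels)
    ultimately show "x \<in> ?L"
      using extreme_point_of_box_vertex[OF chain_profile_polytope_subset_box] by blast
  qed
qed

end
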